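(* Let $\preceq$ be a partial order on a nonempty set $S_0$, let $n \ge 1$, and let $S = S_0^n$ carry the component-wise partial order ($a \preceq b$ iff $a_i \preceq b_i$ for all $i$). Let $\mathcal{G}$ be a subgroup of the symmetric group $\mathcal{S}_n$, acting on $S$ by permuting coordinates, $\sigma a = (a_{\sigma(i)})_{i}$. Then on the set $S/\mathcal{G}$ of orbits, the strong relation ($A \preceq B$ iff for all $a \in A$ there is $b \in B$ with $a \preceq b$) and the weak relation ($A \preceq B$ iff there exist $a \in A$, $b \in B$ with $a \preceq b$) are identical, and this relation is a partial order on $S/\mathcal{G}$. *)

theory Defs
  imports "HOL-Algebra.Sym_Groups" "HOL-Library.FuncSet"
begin

definition prod_space :: "nat \<Rightarrow> 'a set \<Rightarrow> (nat \<Rightarrow> 'a) set" where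
  "prod_space n S0 = PiE {1..n} (\<lambda>_. S0)"

definition cw_le :: "nat \<Rightarrow> 'a rel \<Rightarrow> (nat \<Rightarrow> 'a) \<Rightarrow> (nat \<Rightarrow> 'a) \<Rightarrow> bool" where
  "cw_le n r a b \<longleftrightarrow> (\<forall>i\<in>{1..n}. (a i, b i) \<in> r)"

definition perm_act :: "(nat \<Rightarrow> nat) \<Rightarrow> (nat \<Rightarrow> 'a) \<Rightarrow> (nat \<Rightarrow> 'a)" where
  "perm_act \<sigma> a = (\<lambda>i. a (\<sigma> i))"

definition orbit_of :: "(nat \<Rightarrow> nat) set \<Rightarrow> (nat \<Rightarrow> 'a) \<Rightarrow> (nat \<Rightarrow> 'a) set" where
  "orbit_of G a = (\<lambda>\<sigma>. perm_act \<sigma> a) ` G"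

definition orbit_space :: "(nat \<Rightarrow> nat) set \<Rightarrow> (nat \<Rightarrow> 'a) set \<Rightarrow> (nat \<Rightarrow> 'a) set set" where
  "orbit_space G S = orbit_of G ` S"

definition strong_rel :: "('b \<Rightarrow> 'b \<Rightarrow> bool) \<Rightarrow> 'b set \<Rightarrow> 'b set \<Rightarrow> bool" where
  "strong_rel R A B \<longleftrightarrow> (\<forall>a\<in>A. \<exists>b\<in>B. R a b)"

definition weak_rel :: "('b \<Rightarrow> 'b \<Rightarrow> bool) \<Rightarrow> 'b set \<Rightarrow> 'b set \<Rightarrow> bool" where
  "weak_rel R A B \<longleftrightarrow> (\<exists>a\<in>A. \<exists>b\<in>B. R a b)"

end

theory Submission
  imports Defs
begin

text \<open>
  If some point of the orbit of \<open>a\<close> lies below some point of the orbit of \<open>b\<close>, then after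
  translating by a group element we get \<open>a \<preceq> \<sigma> b\<close>, and applying any \<open>\<rho> \<in> \<G>\<close> to this
  inequality puts every point of the orbit of \<open>a\<close> below a point of the orbit of \<open>b\<close>;
  so the weak and the strong relation coincide. For antisymmetry, \<open>a \<preceq> \<sigma> b\<close> and \<open>b \<preceq> \<tau> a\<close> give \<open>a \<preceq> \<pi> a\<close> with \<open>\<pi> = \<tau> \<circ> \<sigma>\<close>,
  hence the chain \<open>a \<preceq> \<pi> a \<preceq> \<pi>\<^sup>2 a \<preceq> \<dots>\<close>, which returns to \<open>a\<close> because \<open>\<pi>\<close> has finite
  order. Thus \<open>\<pi> a = a\<close>, so \<open>a \<preceq> \<sigma> b \<preceq> a\<close> and the two orbits are equal.
\<close>

lemma subgroup_sym_group_closed: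
  assumes "subgroup G (sym_group n)"
  shows subgroup_sym_group_permutes: "\<sigma> \<in> G \<Longrightarrow> \<sigma> permutes {1..n}"
    and subgroup_sym_group_id: "id \<in> G"
    and subgroup_sym_group_comp: "\<sigma> \<in> G \<Longrightarrow> \<tau> \<in> G \<Longrightarrow> \<sigma> \<circ> \<tau> \<in> G"
    and subgroup_sym_group_inv: "\<sigma> \<in> G \<Longrightarrow> inv' \<sigma> \<in> G"
proof -
  interpret subgroup G "sym_group n" by fact
  show "\<sigma> \<in> G \<Longrightarrow> \<sigma> permutes {1..n}"
    using subset sym_group_carrier by blast
  show "id \<in> G"
    using one_closed by (simp add: sym_group_one)
  show "\<sigma> \<in> G \<Longrightarrow> \<tau> \<in> G \<Longrightarrow> \<sigma> \<circ> \<tau> \<in> G"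
    using m_closed by (simp add: sym_group_mult)
  show "\<sigma> \<in> G \<Longrightarrow> inv' \<sigma> \<in> G"
    using m_inv_closed subset sym_group_inv_equality by fastforce
qed

lemma perm_act_id [simp]: "perm_act id a = a"
  by (simp add: perm_act_def)

lemma perm_act_comp: "perm_act \<sigma> (perm_act \<tau> a) = perm_act (\<tau> \<circ> \<sigma>) a"
  by (simp add: perm_act_def)

lemma perm_act_in_prod_space:
  assumes "\<sigma> permutes {1..n}" "a \<in> prod_space n S0"
  shows "perm_act \<sigma> a \<in> prod_space n S0"
  using assms permutes_in_image[OF assms(1)] permutes_not_in[OF assms(1)]
  by (auto simp: prod_space_def perm_act_def PiE_def Pi_def extensional_def)

lemma cw_le_perm_act:
  assumes "\<sigma> permutes {1..n}" "cw_le n r a b"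
  shows "cw_le n r (perm_act \<sigma> a) (perm_act \<sigma> b)"
  using assms permutes_in_image[OF assms(1)] by (auto simp: cw_le_def perm_act_def)

lemma cw_le_refl:
  assumes "refl_on S0 r" "a \<in> prod_space n S0"
  shows "cw_le n r a a"
  using assms by (auto simp: cw_le_def prod_space_def refl_on_def)

lemma cw_le_trans:
  assumes "trans r" "cw_le n r a b" "cw_le n r b c"
  shows "cw_le n r a c"
  using assms unfolding cw_le_def trans_def by blast

lemma cw_le_antisym:
  assumes "antisym r" "a \<in> prod_space n S0" "b \<in> prod_space n S0"
    and "cw_le n r a b" "cw_le n r b a"
  shows "a = b"
proof (rule PiE_ext[OF assms(2,3)[unfolded prod_space_def]])
  fix i
  assume "i \<in> {1..n}"
  then show "a i = b i"
    using assms(4,5) antisymD[OF assms(1)] unfolding cw_le_def by blast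
qed

lemma cw_le_perm_act_fixed:
  assumes "trans r" "antisym r" "\<pi> permutes {1..n}" "cw_le n r a (perm_act \<pi> a)"
  shows "perm_act \<pi> a = a"
proof -
  have ascending: "cw_le n r a (perm_act (\<pi> ^^ Suc k) a)" for k
  proof (induction k)
    case 0
    show ?case using assms(4) by simp
  next
    case (Suc k)
    have "cw_le n r (perm_act \<pi> a) (perm_act \<pi> (perm_act (\<pi> ^^ Suc k) a))"
      using cw_le_perm_act[OF assms(3) Suc.IH] .
    then have "cw_le n r (perm_act \<pi> a) (perm_act (\<pi> ^^ Suc (Suc k)) a)"
      by (simp only: perm_act_comp funpow_Suc_right)
    then show ?case using assms(1,4) cw_le_trans by blast
  qed
  obtain m where m: "\<pi> ^^ m = id" "m > 1"
    using assms(3) permutation_is_nilpotent' permutation_permutes by blast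
  then obtain k where k: "m = Suc (Suc k)"
    by (metis One_nat_def Suc_lessE gr0_conv_Suc)
  have "cw_le n r (perm_act \<pi> a) (perm_act \<pi> (perm_act (\<pi> ^^ Suc k) a))"
    using cw_le_perm_act[OF assms(3) ascending] .
  also have "perm_act \<pi> (perm_act (\<pi> ^^ Suc k) a) = a"
    using m k by (simp only: perm_act_comp funpow_Suc_right[symmetric] perm_act_id)
  finally have descending: "cw_le n r (perm_act \<pi> a) a" .
  show ?thesis
  proof
    fix i
    show "perm_act \<pi> a i = a i"
    proof (cases "i \<in> {1..n}")
      case True
      then show ?thesis
        using assms(4) descending antisymD[OF assms(2)] unfolding cw_le_def perm_act_def by blast
    next
      case False
      then show ?thesis using permutes_not_in[OF assms(3)] by (simp add: perm_act_def)
    qed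
  qed
qed

lemma self_in_orbit_of:
  assumes "subgroup G (sym_group n)"
  shows "a \<in> orbit_of G a"
  using subgroup_sym_group_id[OF assms] perm_act_id unfolding orbit_of_def by (metis image_eqI)

lemma orbit_of_subset_prod_space:
  assumes "subgroup G (sym_group n)" "a \<in> prod_space n S0"
  shows "orbit_of G a \<subseteq> prod_space n S0"
  using assms perm_act_in_prod_space subgroup_sym_group_permutes
  unfolding orbit_of_def by blast

lemma orbit_of_perm_act:
  assumes "subgroup G (sym_group n)" "\<sigma> \<in> G"
  shows "orbit_of G (perm_act \<sigma> a) = orbit_of G a"
proof
  show "orbit_of G (perm_act \<sigma> a) \<subseteq> orbit_of G a"
    using assms subgroup_sym_group_comp by (auto simp: orbit_of_def perm_act_comp)
  show "orbit_of G a \<subseteq> orbit_of G (perm_act \<sigma> a)"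
  proof
    fix x
    assume "x \<in> orbit_of G a"
    then obtain \<tau> where \<tau>: "\<tau> \<in> G" "x = perm_act \<tau> a"
      by (auto simp: orbit_of_def)
    have "x = perm_act (inv' \<sigma> \<circ> \<tau>) (perm_act \<sigma> a)"
      using \<tau> permutes_inv_o(1)[OF subgroup_sym_group_permutes[OF assms]]
      by (simp add: perm_act_comp o_assoc)
    moreover have "inv' \<sigma> \<circ> \<tau> \<in> G"
      using assms \<tau>(1) subgroup_sym_group_comp subgroup_sym_group_inv by blast
    ultimately show "x \<in> orbit_of G (perm_act \<sigma> a)"
      by (auto simp: orbit_of_def)
  qed
qed

lemma weak_rel_orbit_of_iff:
  assumes "subgroup G (sym_group n)"
  shows "weak_rel (cw_le n r) (orbit_of G a) (orbit_of G b) \<longleftrightarrow>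
    (\<exists>\<sigma>\<in>G. cw_le n r a (perm_act \<sigma> b))"
proof
  assume "weak_rel (cw_le n r) (orbit_of G a) (orbit_of G b)"
  then obtain \<sigma> \<tau> where \<sigma>\<tau>: "\<sigma> \<in> G" "\<tau> \<in> G"
      "cw_le n r (perm_act \<sigma> a) (perm_act \<tau> b)"
    by (auto simp: weak_rel_def orbit_of_def)
  have \<sigma>: "\<sigma> permutes {1..n}"
    using assms \<sigma>\<tau>(1) by (rule subgroup_sym_group_permutes)
  have "cw_le n r (perm_act (inv' \<sigma>) (perm_act \<sigma> a)) (perm_act (inv' \<sigma>) (perm_act \<tau> b))"
    using cw_le_perm_act[OF permutes_inv[OF \<sigma>] \<sigma>\<tau>(3)] .
  then have "cw_le n r a (perm_act (\<tau> \<circ> inv' \<sigma>) b)"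
    by (simp add: perm_act_comp permutes_inv_o(1)[OF \<sigma>])
  moreover have "\<tau> \<circ> inv' \<sigma> \<in> G"
    using assms \<sigma>\<tau>(1,2) subgroup_sym_group_comp subgroup_sym_group_inv by blast
  ultimately show "\<exists>\<sigma>\<in>G. cw_le n r a (perm_act \<sigma> b)" by blast
next
  assume "\<exists>\<sigma>\<in>G. cw_le n r a (perm_act \<sigma> b)"
  then obtain \<sigma> where "\<sigma> \<in> G" "cw_le n r a (perm_act \<sigma> b)" by blast
  moreover have "perm_act \<sigma> b \<in> orbit_of G b"
    using \<open>\<sigma> \<in> G\<close> by (simp add: orbit_of_def)
  ultimately show "weak_rel (cw_le n r) (orbit_of G a) (orbit_of G b)"
    using self_in_orbit_of[OF assms, of a] unfolding weak_rel_def by blast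
qed

lemma strong_rel_orbit_of_iff_weak_rel:
  assumes "subgroup G (sym_group n)"
  shows "strong_rel (cw_le n r) (orbit_of G a) (orbit_of G b) \<longleftrightarrow>
    weak_rel (cw_le n r) (orbit_of G a) (orbit_of G b)"
proof
  assume "strong_rel (cw_le n r) (orbit_of G a) (orbit_of G b)"
  then show "weak_rel (cw_le n r) (orbit_of G a) (orbit_of G b)"
    using self_in_orbit_of[OF assms] unfolding strong_rel_def weak_rel_def by blast
next
  assume "weak_rel (cw_le n r) (orbit_of G a) (orbit_of G b)"
  then obtain \<sigma> where \<sigma>: "\<sigma> \<in> G" "cw_le n r a (perm_act \<sigma> b)"
    using weak_rel_orbit_of_iff[OF assms] by blast
  show "strong_rel (cw_le n r) (orbit_of G a) (orbit_of G b)"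
    unfolding strong_rel_def
  proof
    fix x
    assume "x \<in> orbit_of G a"
    then obtain \<rho> where \<rho>: "\<rho> \<in> G" "x = perm_act \<rho> a"
      by (auto simp: orbit_of_def)
    have "cw_le n r x (perm_act (\<sigma> \<circ> \<rho>) b)"
      using cw_le_perm_act[OF subgroup_sym_group_permutes[OF assms \<rho>(1)] \<sigma>(2)] \<rho>(2)
      by (simp add: perm_act_comp)
    moreover have "perm_act (\<sigma> \<circ> \<rho>) b \<in> orbit_of G b"
      using assms \<sigma>(1) \<rho>(1) subgroup_sym_group_comp unfolding orbit_of_def by blast
    ultimately show "\<exists>y\<in>orbit_of G b. cw_le n r x y" by blast
  qed
qed

lemma orbit_of_antisym:
  assumes "subgroup G (sym_group n)" "partial_order_on S0 r"
    and "a \<in> prod_space n S0" "b \<in> prod_space n S0"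
    and "weak_rel (cw_le n r) (orbit_of G a) (orbit_of G b)"
    and "weak_rel (cw_le n r) (orbit_of G b) (orbit_of G a)"
  shows "orbit_of G a = orbit_of G b"
proof -
  have r: "trans r" "antisym r"
    using assms(2) by (auto simp: partial_order_on_def preorder_on_def)
  obtain \<sigma> where \<sigma>: "\<sigma> \<in> G" "cw_le n r a (perm_act \<sigma> b)"
    using assms(5) weak_rel_orbit_of_iff[OF assms(1)] by blast
  obtain \<tau> where \<tau>: "\<tau> \<in> G" "cw_le n r b (perm_act \<tau> a)"
    using assms(6) weak_rel_orbit_of_iff[OF assms(1)] by blast
  have \<sigma>_perm: "\<sigma> permutes {1..n}" and \<pi>_perm: "\<tau> \<circ> \<sigma> permutes {1..n}"
    using assms(1) \<sigma>(1) \<tau>(1) subgroup_sym_group_comp subgroup_sym_group_permutes by blast+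
  have "cw_le n r (perm_act \<sigma> b) (perm_act (\<tau> \<circ> \<sigma>) a)"
    using cw_le_perm_act[OF \<sigma>_perm \<tau>(2)] by (simp add: perm_act_comp)
  then have "perm_act (\<tau> \<circ> \<sigma>) a = a"
    using cw_le_perm_act_fixed[OF r \<pi>_perm] cw_le_trans[OF r(1) \<sigma>(2)] by blast
  then have "a = perm_act \<sigma> b"
    using cw_le_antisym[OF r(2) assms(3) perm_act_in_prod_space[OF \<sigma>_perm assms(4)] \<sigma>(2)]
      \<open>cw_le n r (perm_act \<sigma> b) (perm_act (\<tau> \<circ> \<sigma>) a)\<close> by simp
  then show ?thesis
    using orbit_of_perm_act[OF assms(1) \<sigma>(1)] by simp
qed

lemma partial_order_on_orbit_space:
  assumes "subgroup G (sym_group n)" "partial_order_on S0 r"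
  defines "\<O> \<equiv> orbit_space G (prod_space n S0)"
  shows "partial_order_on \<O> {(A, B). A \<in> \<O> \<and> B \<in> \<O> \<and> strong_rel (cw_le n r) A B}"
proof -
  have r: "refl_on S0 r" "trans r"
    using assms(2) by (auto simp: partial_order_on_def preorder_on_def)
  have refl: "strong_rel (cw_le n r) A A" if "A \<in> \<O>" for A
    using that orbit_of_subset_prod_space[OF assms(1)] cw_le_refl[OF r(1)]
    by (fastforce simp: \<O>_def orbit_space_def strong_rel_def)
  have trans: "strong_rel (cw_le n r) A C"
    if "strong_rel (cw_le n r) A B" "strong_rel (cw_le n r) B C" for A B C
    using that cw_le_trans[OF r(2)] unfolding strong_rel_def by meson
  have antisym: "A = B"
    if AB: "A \<in> \<O>" "B \<in> \<O>" "strong_rel (cw_le n r) A B" "strong_rel (cw_le n r) B A"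
    for A B
  proof -
    obtain a b where "a \<in> prod_space n S0" "b \<in> prod_space n S0"
        "A = orbit_of G a" "B = orbit_of G b"
      using AB(1,2) by (auto simp: \<O>_def orbit_space_def)
    then show ?thesis
      using AB(3,4) orbit_of_antisym[OF assms(1,2)]
      by (simp add: strong_rel_orbit_of_iff_weak_rel[OF assms(1)])
  qed
  show ?thesis
    unfolding partial_order_on_def preorder_on_def refl_on_def trans_def antisym_def
    using refl trans antisym by blast
qed

theorem corollary3:
  fixes S0 :: "'a set" and r :: "'a rel" and n :: nat and G :: "(nat \<Rightarrow> nat) set"
  assumes "S0 \<noteq> {}"
    and "partial_order_on S0 r"
    and "n \<ge> 1"
    and "subgroup G (sym_group n)"
  shows "(\<forall>A\<in>orbit_space G (prod_space n S0). \<forall>B\<in>orbit_space G (prod_space n S0).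
            strong_rel (cw_le n r) A B \<longleftrightarrow> weak_rel (cw_le n r) A B)
         \<and> partial_order_on (orbit_space G (prod_space n S0))
             {(A, B). A \<in> orbit_space G (prod_space n S0) \<and> B \<in> orbit_space G (prod_space n S0)
                      \<and> strong_rel (cw_le n r) A B}"
proof (intro conjI ballI)
  fix A B
  assume "A \<in> orbit_space G (prod_space n S0)" "B \<in> orbit_space G (prod_space n S0)"
  then obtain a b where "A = orbit_of G a" "B = orbit_of G b"
    by (auto simp: orbit_space_def)
  then show "strong_rel (cw_le n r) A B \<longleftrightarrow> weak_rel (cw_le n r) A B"
    by (simp add: strong_rel_orbit_of_iff_weak_rel[OF assms(4)])
qed (rule partial_order_on_orbit_space[OF assms(4,2)])

end
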